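(* Let $p$ be an odd prime and let $J$ be a finite family of lattice points in $\mathbb{Z}^2$ (repetitions allowed) with $|J|=3p-2$ or $|J|=3p-1$. Then \[ 1-(p,J)+(2p,J)\equiv 0 \pmod p. \]
   Context: For a finite family $X$ of lattice points in $\mathbb{Z}^2$ (points may repeat; subsets are subfamilies, i.e. subsets of the index set) and an integer $n\ge 0$, $(n,X)$ denotes the number of $n$-element subfamilies of $X$ whose coordinatewise sum is congruent to $(0,0)$ modulo $p$. *)

theory Defs
  imports "HOL-Number_Theory.Number_Theory"
begin

text \<open>A finite family of lattice points in Z^2 (repetitions allowed) is modelled as
  an indexing function X :: nat => int * int on the index set {..<m}.
  zero_sum_count p n X m is the number of n-element subfamilies (subsets of
  the index set) whose coordinatewise sum is congruent to (0,0) modulo p.\<close>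

definition zero_sum_count :: "nat \<Rightarrow> nat \<Rightarrow> (nat \<Rightarrow> int \<times> int) \<Rightarrow> nat \<Rightarrow> nat" where
  "zero_sum_count p n X m =
     card {S. S \<subseteq> {..<m} \<and> card S = n \<and>
              [(\<Sum>i\<in>S. fst (X i)) = 0] (mod int p) \<and>
              [(\<Sum>i\<in>S. snd (X i)) = 0] (mod int p)}"

end

theory Submission
  imports Defs
begin

text \<open>Functions on subsets \<open>S \<subseteq> V\<close> of a finite set are polynomials in the indicator
  variables \<open>x\<^sub>i = [i \<in> S]\<close>, and every polynomial of degree \<open>< |V|\<close> is annihilated by
  the alternating sum \<open>\<Sum>\<^sub>S (-1)\<^bsup>|S|\<^esup> f S\<close>. By Fermat,
  \<open>(1 - A\<^bsup>p-1\<^esup>)(1 - B\<^bsup>p-1\<^esup>)(1 - |S|\<^bsup>p-1\<^esup>)\<close>, where \<open>A, B\<close> are the coordinate sums of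
  \<open>S\<close>, is congruent mod \<open>p\<close> to the indicator of "\<open>S\<close> is a zero-sum subfamily with
  \<open>p | |S|\<close>" and has degree \<open>3(p - 1) < |J|\<close>. Hence the signed count of such subfamilies
  vanishes mod \<open>p\<close>; since \<open>|J| < 3p\<close> they have size \<open>0\<close>, \<open>p\<close> or \<open>2p\<close>.\<close>

text \<open>\<open>cube_degree_le V d f\<close>: on the Boolean cube \<open>Pow V\<close>, \<open>f\<close> agrees with a polynomial of
  degree at most \<open>d\<close> in the indicator variables; the monomial \<open>\<Prod>\<^bsub>i\<in>T\<^esub> x\<^sub>i\<close> is
  \<open>of_bool (T \<subseteq> S)\<close>.\<close>

inductive cube_degree_le :: "'i set \<Rightarrow> nat \<Rightarrow> ('i set \<Rightarrow> 'a::comm_ring_1) \<Rightarrow> bool"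
  for V :: "'i set" where
  monomial: "T \<subseteq> V \<Longrightarrow> card T \<le> d \<Longrightarrow> cube_degree_le V d (\<lambda>S. of_bool (T \<subseteq> S))"
| scale: "cube_degree_le V d f \<Longrightarrow> cube_degree_le V d (\<lambda>S. c * f S)"
| add: "cube_degree_le V d f \<Longrightarrow> cube_degree_le V d g \<Longrightarrow> cube_degree_le V d (\<lambda>S. f S + g S)"
| cong: "cube_degree_le V d f \<Longrightarrow> (\<And>S. S \<subseteq> V \<Longrightarrow> f S = g S) \<Longrightarrow> cube_degree_le V d g"

lemma cube_degree_le_const: "cube_degree_le V d (\<lambda>S. c)"
  using cube_degree_le.scale[OF cube_degree_le.monomial[of "{}" V d], of c] by simp

lemma cube_degree_le_diff:
  assumes "cube_degree_le V d f" "cube_degree_le V d g"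
  shows "cube_degree_le V d (\<lambda>S. f S - g S)"
  using cube_degree_le.add[OF assms(1) cube_degree_le.scale[OF assms(2), of "-1"]] by simp

lemma cube_degree_le_sum:
  assumes "finite I" "\<And>i. i \<in> I \<Longrightarrow> cube_degree_le V d (f i)"
  shows "cube_degree_le V d (\<lambda>S. \<Sum>i\<in>I. f i S)"
  using assms by (induction I rule: finite_induct)
    (simp_all add: cube_degree_le_const cube_degree_le.add)

lemma cube_degree_le_monomial_mult:
  assumes "cube_degree_le V d g" "T \<subseteq> V" "card T \<le> e"
  shows "cube_degree_le V (e + d) (\<lambda>S. of_bool (T \<subseteq> S) * g S)"
  using assms(1)
proof (induction rule: cube_degree_le.induct)
  case (monomial U d)
  have "card (T \<union> U) \<le> e + d"
    using card_Un_le[of T U] monomial.hyps(2) assms(3) by linarith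
  then have "cube_degree_le V (e + d) (\<lambda>S. of_bool (T \<union> U \<subseteq> S))"
    using assms(2) monomial.hyps(1) by (intro cube_degree_le.monomial) auto
  then show ?case by (rule cube_degree_le.cong) auto
next
  case (scale d f c)
  then show ?case
    using cube_degree_le.scale[OF scale.IH, of c] by (simp add: mult.left_commute)
next
  case (add d f g)
  then show ?case
    using cube_degree_le.add[OF add.IH] by (simp add: distrib_left)
next
  case (cong d f g)
  then show ?case by (auto intro: cube_degree_le.cong)
qed

lemma cube_degree_le_mult:
  assumes "cube_degree_le V d f" "cube_degree_le V e g"
  shows "cube_degree_le V (d + e) (\<lambda>S. f S * g S)"
  using assms(1)
proof (induction rule: cube_degree_le.induct)
  case (monomial T)
  then show ?case by (rule cube_degree_le_monomial_mult[OF assms(2)])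
next
  case (scale d f c)
  then show ?case using cube_degree_le.scale by (fastforce simp: mult.assoc)
next
  case (add d f g)
  then show ?case using cube_degree_le.add by (fastforce simp: distrib_right)
next
  case (cong d f g)
  then show ?case by (auto intro: cube_degree_le.cong)
qed

lemma cube_degree_le_power:
  assumes "cube_degree_le V d f"
  shows "cube_degree_le V (k * d) (\<lambda>S. f S ^ k)"
proof (induction k)
  case 0
  then show ?case by (simp add: cube_degree_le_const)
next
  case (Suc k)
  then show ?case using cube_degree_le_mult[OF assms Suc] by simp
qed

lemma cube_degree_le_linear:
  assumes "finite V"
  shows "cube_degree_le V 1 (\<lambda>S. \<Sum>i\<in>S. a i)"
proof (rule cube_degree_le.cong)
  show "cube_degree_le V 1 (\<lambda>S. \<Sum>i\<in>V. a i * of_bool ({i} \<subseteq> S))"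
    using assms by (intro cube_degree_le_sum cube_degree_le.scale cube_degree_le.monomial) auto
  show "(\<Sum>i\<in>V. a i * of_bool ({i} \<subseteq> S)) = (\<Sum>i\<in>S. a i)" if "S \<subseteq> V" for S
    using that assms sum.inter_restrict[of V "\<lambda>i. a i" S] by (simp add: Int_absorb1 if_distrib)
qed

lemma alternating_sum_indicator_superset:
  fixes V :: "'i set"
  assumes "finite V" "T \<subseteq> V" "card T < card V"
  shows "(\<Sum>S\<in>Pow V. (-1) ^ card S * of_bool (T \<subseteq> S)) = (0::'a::comm_ring_1)"
proof -
  \<comment> \<open>Toggling a point \<open>j \<notin> T\<close> pairs the subsets with opposite signs.\<close>
  obtain j where j: "j \<in> V" "j \<notin> T"
    using assms card_mono[of V T] by (metis subsetI subset_antisym order.strict_iff_not)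
  define A where "A = V - {j}"
  have V: "V = insert j A" and A: "finite A" "j \<notin> A"
    using j assms(1) by (auto simp: A_def)
  let ?g = "\<lambda>S. (-1) ^ card S * of_bool (T \<subseteq> S) :: 'a"
  have "inj_on (insert j) (Pow A)"
    using A(2) by (intro inj_onI) (metis PowD insert_ident subsetD)
  moreover have "Pow A \<inter> insert j ` Pow A = {}"
    using A(2) by auto
  ultimately have "(\<Sum>S\<in>Pow V. ?g S) = (\<Sum>S\<in>Pow A. ?g S) + (\<Sum>S\<in>Pow A. ?g (insert j S))"
    unfolding V Pow_insert using A(1)
    by (simp only: sum.union_disjoint finite_Pow_iff finite_imageI sum.reindex comp_def)
  also have "(\<Sum>S\<in>Pow A. ?g (insert j S)) = (\<Sum>S\<in>Pow A. - ?g S)"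
  proof (rule sum.cong)
    fix S assume "S \<in> Pow A"
    then have "finite S" "j \<notin> S" using A finite_subset by auto
    then show "?g (insert j S) = - ?g S" using j(2) by auto
  qed simp
  finally show ?thesis by (simp add: sum_negf)
qed

lemma alternating_sum_cube_degree_le:
  assumes "cube_degree_le V d f" "finite V" "d < card V"
  shows "(\<Sum>S\<in>Pow V. (-1) ^ card S * f S) = 0"
  using assms(1,3)
proof (induction rule: cube_degree_le.induct)
  case (monomial T d)
  then show ?case by (simp add: alternating_sum_indicator_superset[OF assms(2)])
next
  case (scale d f c)
  then show ?case by (simp add: mult.left_commute[of _ c] sum_distrib_left[symmetric])
next
  case (add d f g)
  then show ?case by (simp add: distrib_left sum.distrib)
next
  case (cong d f g)
  then show ?case by (metis (no_types, lifting) PowD sum.cong)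
qed

lemma fermat_theorem_int:
  fixes a :: int
  assumes "prime p" "\<not> int p dvd a"
  shows "[a ^ (p - 1) = 1] (mod int p)"
proof -
  have p: "int p > 0"
    using assms(1) prime_gt_0_nat by simp
  define b where "b = nat (a mod int p)"
  have ab: "[a = int b] (mod int p)"
    using p by (simp add: b_def cong_def)
  have "\<not> p dvd b"
    using assms(2) ab by (metis cong_dvd_iff int_dvd_int_iff)
  then have "[int b ^ (p - 1) = 1] (mod int p)"
    using fermat_theorem[OF assms(1)] by (metis cong_int_iff of_nat_1 of_nat_power)
  then show ?thesis
    using cong_pow[OF ab] cong_trans by blast
qed

lemma one_minus_power_cong_indicator:
  fixes a :: int
  assumes "prime p"
  shows "[1 - a ^ (p - 1) = of_bool (int p dvd a)] (mod int p)"
proof (cases "int p dvd a")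
  case True
  then have "int p dvd a ^ (p - 1)"
    using assms prime_gt_1_nat[of p] by (metis dvd_power dvd_trans zero_less_diff)
  then show ?thesis
    using True cong_diff[OF cong_refl[of 1], of _ 0] by (simp add: cong_0_iff)
next
  case False
  then show ?thesis
    using cong_diff[OF cong_refl[of 1] fermat_theorem_int[OF assms False]] by simp
qed

lemma alternating_sum_zero_sum_subsets_cong:
  fixes a b :: "'i \<Rightarrow> int"
  assumes "prime p" "finite V" "3 * (p - 1) < card V"
  shows "[(\<Sum>S | S \<subseteq> V \<and> [(\<Sum>i\<in>S. a i) = 0] (mod int p) \<and>
                   [(\<Sum>i\<in>S. b i) = 0] (mod int p) \<and> p dvd card S.
           (-1::int) ^ card S) = 0] (mod int p)"
proof -
  define zero_sum where "zero_sum S \<longleftrightarrow> [(\<Sum>i\<in>S. a i) = 0] (mod int p) \<and>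
      [(\<Sum>i\<in>S. b i) = 0] (mod int p) \<and> p dvd card S" for S
  define \<phi> where "\<phi> S = (1 - (\<Sum>i\<in>S. a i) ^ (p - 1)) * (1 - (\<Sum>i\<in>S. b i) ^ (p - 1))
      * (1 - (\<Sum>i\<in>S. 1) ^ (p - 1))" for S
  have "cube_degree_le V ((p - 1) * 1 + (p - 1) * 1 + (p - 1) * 1) \<phi>"
    unfolding \<phi>_def using assms(2)
    by (intro cube_degree_le_mult cube_degree_le_diff cube_degree_le_const
        cube_degree_le_power cube_degree_le_linear)
  then have "(\<Sum>S\<in>Pow V. (-1) ^ card S * \<phi> S) = 0"
    by (rule alternating_sum_cube_degree_le) (use assms(2,3) in simp_all)
  moreover have \<phi>_cong: "[\<phi> S = of_bool (zero_sum S)] (mod int p)" for S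
  proof -
    have "of_bool (zero_sum S) = of_bool (int p dvd (\<Sum>i\<in>S. a i))
        * of_bool (int p dvd (\<Sum>i\<in>S. b i)) * (of_bool (int p dvd (\<Sum>i\<in>S. 1)) :: int)"
      unfolding zero_sum_def by (simp only: of_bool_conj mult.assoc cong_0_iff) simp
    then show ?thesis
      unfolding \<phi>_def by (simp only:) (intro cong_mult one_minus_power_cong_indicator[OF assms(1)])
  qed
  then have "[(\<Sum>S\<in>Pow V. (-1) ^ card S * \<phi> S)
      = (\<Sum>S\<in>Pow V. (-1) ^ card S * of_bool (zero_sum S))] (mod int p)"
    by (intro cong_sum cong_mult cong_refl)
  ultimately have "[(\<Sum>S\<in>Pow V. (-1) ^ card S * of_bool (zero_sum S)) = 0] (mod int p)"
    by (simp add: cong_sym_eq)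
  also have "(\<Sum>S\<in>Pow V. (-1) ^ card S * of_bool (zero_sum S))
      = (\<Sum>S | S \<subseteq> V \<and> zero_sum S. (-1::int) ^ card S)"
    using assms(2) by (simp add: sum.inter_filter[symmetric] Pow_def Int_def)
  finally show ?thesis
    by (simp add: zero_sum_def)
qed

lemma zero_sum_count_0: "zero_sum_count p 0 X m = 1"
proof -
  have "{S. S \<subseteq> {..<m} \<and> card S = 0 \<and> [(\<Sum>i\<in>S. fst (X i)) = 0] (mod int p) \<and>
            [(\<Sum>i\<in>S. snd (X i)) = 0] (mod int p)} = {{}}"
    using finite_subset[of _ "{..<m}"] by auto
  then show ?thesis
    by (simp add: zero_sum_count_def)
qed

lemma sum_zero_sum_subsets_by_card:
  assumes "finite N"
  shows "(\<Sum>S | S \<subseteq> {..<m} \<and> [(\<Sum>i\<in>S. fst (X i)) = 0] (mod int p) \<and>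
                   [(\<Sum>i\<in>S. snd (X i)) = 0] (mod int p) \<and> card S \<in> N. (-1::int) ^ card S)
         = (\<Sum>n\<in>N. (-1) ^ n * int (zero_sum_count p n X m))"
    (is "sum _ ?Z = _")
proof -
  have "finite ?Z"
    by (rule finite_subset[of _ "Pow {..<m}"]) auto
  then have "sum (\<lambda>S. (-1::int) ^ card S) ?Z = (\<Sum>n\<in>N. \<Sum>S | S \<in> ?Z \<and> card S = n. (-1) ^ card S)"
    using assms by (intro sum.group[symmetric]) auto
  also have "\<dots> = (\<Sum>n\<in>N. (-1) ^ n * int (zero_sum_count p n X m))"
  proof (rule sum.cong)
    fix n assume "n \<in> N"
    then have "{S. S \<in> ?Z \<and> card S = n} = {S. S \<subseteq> {..<m} \<and> card S = n \<and>
        [(\<Sum>i\<in>S. fst (X i)) = 0] (mod int p) \<and> [(\<Sum>i\<in>S. snd (X i)) = 0] (mod int p)}"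
      by auto
    then show "(\<Sum>S | S \<in> ?Z \<and> card S = n. (-1) ^ card S) = (-1) ^ n * int (zero_sum_count p n X m)"
      by (simp add: zero_sum_count_def)
  qed simp
  finally show ?thesis .
qed

theorem corollary2:
  fixes p m :: nat and J :: "nat \<Rightarrow> int \<times> int"
  assumes "prime p" and "odd p"
    and "m = 3 * p - 2 \<or> m = 3 * p - 1"
  shows "[1 - int (zero_sum_count p p J m) + int (zero_sum_count p (2 * p) J m) = 0] (mod int p)"
proof -
  have p: "p \<ge> 2"
    using assms(1) prime_ge_2_nat by blast
  have m: "3 * (p - 1) < m" "m < 3 * p"
    using assms(3) p by auto
  have "p dvd card S \<longleftrightarrow> card S \<in> {0, p, 2 * p}" if "S \<subseteq> {..<m}" for S
  proof -
    have "card S < 3 * p"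
      using card_mono[OF _ that] m(2) by simp
    show ?thesis
    proof
      assume "p dvd card S"
      then obtain k where k: "card S = p * k" ..
      with \<open>card S < 3 * p\<close> have "k < 3"
        by simp
      then show "card S \<in> {0, p, 2 * p}"
        using k by (auto simp: less_Suc_eq numeral_3_eq_3)
    qed auto
  qed
  then have "(\<Sum>S | S \<subseteq> {..<m} \<and> [(\<Sum>i\<in>S. fst (J i)) = 0] (mod int p) \<and>
                   [(\<Sum>i\<in>S. snd (J i)) = 0] (mod int p) \<and> p dvd card S. (-1::int) ^ card S)
      = (\<Sum>n\<in>{0, p, 2 * p}. (-1) ^ n * int (zero_sum_count p n J m))"
    by (subst sum_zero_sum_subsets_by_card[symmetric]) (auto intro!: sum.cong)
  also have "\<dots> = 1 - int (zero_sum_count p p J m) + int (zero_sum_count p (2 * p) J m)"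
    using p assms(2) by (simp add: zero_sum_count_0 power_mult)
  finally show ?thesis
    using alternating_sum_zero_sum_subsets_cong[OF assms(1), of "{..<m}" "\<lambda>i. fst (J i)" "\<lambda>i. snd (J i)"] m(1)
    by simp
qed

end
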